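(* Let $J_0$ be a two-sided $p$-periodic Jacobi matrix, $1\le q\le\infty$, and $\varepsilon>0$. There is a constant $C$ such that $$e^{1-p}\bigl\|\tilde d_m((a,b),\mathcal{T}_{J_0})\bigr\|_{\ell^q}\le\bigl\|d_m((a,b),\mathcal{T}_{J_0})\bigr\|_{\ell^q}\le C\bigl\|\tilde d_m((a,b),\mathcal{T}_{J_0})\bigr\|_{\ell^q}$$ for all bounded sequences $\{(a_n,b_n)\}_{n\ge1}$ with $b_n\in\mathbb{R}$ and $\varepsilon^{-1}>a_n>\varepsilon$ for all $n$, where all $\ell^q$ norms are taken over $m\in\{1,2,3,\dots\}$.
   Context: For a two-sided $p$-periodic Jacobi matrix $J_0$ (tridiagonal on $\ell^2(\mathbb{Z})$ with $p$-periodic parameters $a^{(0)}_n>0$, $b^{(0)}_n\in\mathbb{R}$), its discriminant is $\Delta_{J_0}(x)=\mathrm{Tr}(\Lambda_p(x)\cdots\Lambda_1(x))$ with $\Lambda_n(x)=\frac1{a^{(0)}_n}\begin{pmatrix}x-b^{(0)}_n&-1\\(a^{(0)}_n)^2&0\end{pmatrix}$, and the isospectral torus $\mathcal{T}_{J_0}$ is the set of two-sided $p$-periodic Jacobi parameter sequences with the same discriminant. For sequences $(a,b),(a',b')$ (two-sided ones restricted to indices $\ge1$): $d_m((a,b),(a',b'))=\sum_{k=0}^\infty e^{-k}(|a_{m+k}-a'_{m+k}|+|b_{m+k}-b'_{m+k}|)$ and $\tilde d_m((a,b),(a',b'))=\sum_{k=0}^{p-1}(|a_{m+k}-a'_{m+k}|+|b_{m+k}-b'_{m+k}|)$;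 distances to $\mathcal{T}_{J_0}$ are infima over $(a',b')\in\mathcal{T}_{J_0}$. *)

theory Defs
  imports "HOL-Analysis.Analysis"
begin

definition periodic_jacobi :: "nat \<Rightarrow> (int \<Rightarrow> real) \<Rightarrow> (int \<Rightarrow> real) \<Rightarrow> bool" where
  "periodic_jacobi p a b \<longleftrightarrow> p \<ge> 1 \<and>
     (\<forall>n. a (n + int p) = a n \<and> b (n + int p) = b n \<and> a n > 0)"

definition transfer :: "(int \<Rightarrow> real) \<Rightarrow> (int \<Rightarrow> real) \<Rightarrow> int \<Rightarrow> real \<Rightarrow> real^2^2" where
  "transfer a b n x = (\<chi> i j.
     (if i = 1 then (if j = 1 then x - b n else -1)
      else (if j = 1 then (a n)^2 else 0)) / a n)"

fun transfer_prod :: "(int \<Rightarrow> real) \<Rightarrow> (int \<Rightarrow> real) \<Rightarrow> nat \<Rightarrow> real \<Rightarrow> real^2^2" where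
  "transfer_prod a b 0 x = mat 1"
| "transfer_prod a b (Suc k) x = transfer a b (int (Suc k)) x ** transfer_prod a b k x"

definition trace2 :: "real^2^2 \<Rightarrow> real" where
  "trace2 M = M $ 1 $ 1 + M $ 2 $ 2"

definition discriminant :: "nat \<Rightarrow> (int \<Rightarrow> real) \<Rightarrow> (int \<Rightarrow> real) \<Rightarrow> real \<Rightarrow> real" where
  "discriminant p a b x = trace2 (transfer_prod a b p x)"

definition iso_torus :: "nat \<Rightarrow> (int \<Rightarrow> real) \<Rightarrow> (int \<Rightarrow> real) \<Rightarrow> ((int \<Rightarrow> real) \<times> (int \<Rightarrow> real)) set" where
  "iso_torus p a0 b0 = {(a', b'). periodic_jacobi p a' b' \<and>
      discriminant p a' b' = discriminant p a0 b0}"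

definition dist_exp :: "nat \<Rightarrow> (nat \<Rightarrow> real) \<Rightarrow> (nat \<Rightarrow> real) \<Rightarrow> (int \<Rightarrow> real) \<Rightarrow> (int \<Rightarrow> real) \<Rightarrow> real" where
  "dist_exp m a b a' b' = (\<Sum>k. exp (- real k) *
      (\<bar>a (m + k) - a' (int (m + k))\<bar> + \<bar>b (m + k) - b' (int (m + k))\<bar>))"

definition dist_tilde :: "nat \<Rightarrow> nat \<Rightarrow> (nat \<Rightarrow> real) \<Rightarrow> (nat \<Rightarrow> real) \<Rightarrow> (int \<Rightarrow> real) \<Rightarrow> (int \<Rightarrow> real) \<Rightarrow> real" where
  "dist_tilde p m a b a' b' = (\<Sum>k<p.
      \<bar>a (m + k) - a' (int (m + k))\<bar> + \<bar>b (m + k) - b' (int (m + k))\<bar>)"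

definition dist_exp_torus where
  "dist_exp_torus p a0 b0 m a b = (INF t \<in> iso_torus p a0 b0. dist_exp m a b (fst t) (snd t))"

definition dist_tilde_torus where
  "dist_tilde_torus p a0 b0 m a b = (INF t \<in> iso_torus p a0 b0. dist_tilde p m a b (fst t) (snd t))"

definition lq_norm :: "ennreal \<Rightarrow> (nat \<Rightarrow> real) \<Rightarrow> ennreal" where
  "lq_norm q x = (if q = \<infinity> then (SUP m \<in> {1..}. ennreal \<bar>x m\<bar>)
     else (let S = (\<Sum>m. ennreal (\<bar>x (Suc m)\<bar> powr enn2real q)) in
           if S = \<infinity> then \<infinity> else ennreal (enn2real S powr (1 / enn2real q))))"

end

theory Submission
  imports Defs "HOL-Computational_Algebra.Polynomial"
begin

text \<open>
The lower bound holds termwise, because e^(-k) >= e^(1-p) for k < p.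
For the upper bound, (prod a_i) times the discriminant is a monic polynomial of degree p whose
subleading coefficient is -(sum b_i); hence all points of the isospectral torus have the same sums
of b_n and of ln a_n over every window of p consecutive indices. Comparing the windows starting at
n and n+1 bounds |b_(n+p) - b_n| and |ln a_(n+p) - ln a_n| by tilde d_n + tilde d_(n+1).
Starting from a torus point within eta of optimal for the window at m and propagating these errors
period by period, the distance at m+k is at most a constant times
tilde d_m + eta + 2 (sum of tilde d_(m+j) over j <= k).
Therefore d_m <= C sup_j e^(-j/2) tilde d_(m+j), and since (sup_j w_j x_j)^q <= sum_j w_j x_j^q
for weights w_j <= 1, summing over m and exchanging the sums bounds such a weighted supremum
in l^q by the l^q norm of tilde d.
\<close>

lemma ennreal_inverse_mult_le:
  fixes x y :: ennreal
  assumes "0 < c" "x \<le> ennreal c * y"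
  shows "ennreal (1 / c) * x \<le> y"
proof -
  have "ennreal (1 / c) * x \<le> ennreal (1 / c) * (ennreal c * y)"
    using assms(2) by (rule mult_left_mono) simp
  also have "\<dots> = y"
    using assms(1) by (simp add: mult.assoc[symmetric] ennreal_mult[symmetric])
  finally show ?thesis .
qed

lemma ennreal_suminf_swap_le:
  fixes f :: "nat \<Rightarrow> nat \<Rightarrow> ennreal"
  shows "(\<Sum>m. \<Sum>j. f m j) \<le> (\<Sum>j. \<Sum>m. f m j)"
proof (rule suminf_le_const)
  fix N
  have "(\<Sum>m<N. \<Sum>j. f m j) = (\<Sum>j. \<Sum>m<N. f m j)"
    by (rule suminf_sum[symmetric]) simp
  also have "\<dots> \<le> (\<Sum>j. \<Sum>m. f m j)"
    by (intro suminf_le allI sum_le_suminf) auto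
  finally show "(\<Sum>m<N. \<Sum>j. f m j) \<le> (\<Sum>j. \<Sum>m. f m j)" .
qed simp

lemma ennreal_suminf_shift_le:
  fixes f :: "nat \<Rightarrow> ennreal"
  shows "(\<Sum>m. f (m + j)) \<le> (\<Sum>m. f m)"
  using suminf_offset[of f j] by (simp add: add_increasing2)

lemma lq_norm_top: "lq_norm \<infinity> x = (SUP m\<in>{1..}. ennreal \<bar>x m\<bar>)"
  by (simp add: lq_norm_def)

lemma one_le_enn2real:
  fixes q :: ennreal
  assumes "1 \<le> q" "q \<noteq> \<infinity>"
  shows "1 \<le> enn2real q"
  using assms by (cases q) auto

lemma lq_norm_le_if_power_sums_le:
  fixes q :: ennreal and u v :: "nat \<Rightarrow> real"
  defines "r \<equiv> enn2real q"
  assumes q: "1 \<le> q" "q \<noteq> \<infinity>" and c: "0 \<le> c"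
    and sums_le: "(\<Sum>m. ennreal (\<bar>u (Suc m)\<bar> powr r))
      \<le> ennreal (c powr r) * (\<Sum>m. ennreal (\<bar>v (Suc m)\<bar> powr r))"
  shows "lq_norm q u \<le> ennreal c * lq_norm q v"
proof -
  define Su where "Su = (\<Sum>m. ennreal (\<bar>u (Suc m)\<bar> powr r))"
  define Sv where "Sv = (\<Sum>m. ennreal (\<bar>v (Suc m)\<bar> powr r))"
  have le: "Su \<le> ennreal (c powr r) * Sv"
    using sums_le by (simp only: Su_def Sv_def)
  have r: "1 \<le> r"
    using one_le_enn2real[OF q] by (simp add: r_def)
  have norms: "lq_norm q u = (if Su = \<infinity> then \<infinity> else ennreal (enn2real Su powr (1 / r)))"
    "lq_norm q v = (if Sv = \<infinity> then \<infinity> else ennreal (enn2real Sv powr (1 / r)))"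
    using q(2) by (simp_all add: lq_norm_def Su_def Sv_def r_def)
  show ?thesis
  proof (cases "Sv = \<infinity>")
    case True
    show ?thesis
    proof (cases "c = 0")
      case True
      then have "Su = 0" using le r by simp
      then show ?thesis using norms r by simp
    next
      case False
      then show ?thesis using \<open>Sv = \<infinity>\<close> c norms by (simp add: ennreal_mult_top)
    qed
  next
    case False
    then have "ennreal (c powr r) * Sv \<noteq> \<infinity>" by (simp add: ennreal_mult_eq_top_iff)
    then have Su: "Su \<noteq> \<infinity>" using le by (auto simp: top_unique)
    have "enn2real Su \<le> enn2real (ennreal (c powr r) * Sv)"
      using le \<open>ennreal (c powr r) * Sv \<noteq> \<infinity>\<close> by (intro enn2real_mono) (auto simp: less_top)
    also have "\<dots> = c powr r * enn2real Sv" by (simp add: enn2real_mult)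
    finally have "enn2real Su powr (1 / r) \<le> (c powr r * enn2real Sv) powr (1 / r)"
      using r by (intro powr_mono2) auto
    also have "\<dots> = c * enn2real Sv powr (1 / r)"
      using r c by (simp add: powr_mult powr_powr)
    finally show ?thesis using Su False c norms by (simp add: ennreal_mult[symmetric] ennreal_leI)
  qed
qed

lemma lq_norm_le_scaled:
  assumes q: "1 \<le> q" and c: "0 \<le> c" and le: "\<And>m. 1 \<le> m \<Longrightarrow> \<bar>u m\<bar> \<le> c * \<bar>v m\<bar>"
  shows "lq_norm q u \<le> ennreal c * lq_norm q v"
proof (cases "q = \<infinity>")
  case True
  have "ennreal \<bar>u m\<bar> \<le> ennreal c * (SUP m\<in>{1..}. ennreal \<bar>v m\<bar>)" if "1 \<le> m" for m
  proof -
    have "ennreal \<bar>u m\<bar> \<le> ennreal c * ennreal \<bar>v m\<bar>"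
      using le[OF that] c by (simp add: ennreal_mult[symmetric] ennreal_leI)
    also have "\<dots> \<le> ennreal c * (SUP m\<in>{1..}. ennreal \<bar>v m\<bar>)"
      using that by (intro mult_left_mono SUP_upper) auto
    finally show ?thesis .
  qed
  then have "(SUP m\<in>{1..}. ennreal \<bar>u m\<bar>) \<le> ennreal c * (SUP m\<in>{1..}. ennreal \<bar>v m\<bar>)"
    by (intro SUP_least) auto
  then show ?thesis using True by (simp only: lq_norm_top)
next
  case False
  define r where "r = enn2real q"
  have r: "1 \<le> r"
    using one_le_enn2real[OF q False] by (simp add: r_def)
  have "ennreal (\<bar>u (Suc m)\<bar> powr r) \<le> ennreal (c powr r) * ennreal (\<bar>v (Suc m)\<bar> powr r)" for m
  proof -
    have "\<bar>u (Suc m)\<bar> powr r \<le> (c * \<bar>v (Suc m)\<bar>) powr r"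
      using le[of "Suc m"] r by (intro powr_mono2) auto
    then show ?thesis using c by (simp add: powr_mult ennreal_mult[symmetric] ennreal_leI)
  qed
  then have "(\<Sum>m. ennreal (\<bar>u (Suc m)\<bar> powr r)) \<le> ennreal (c powr r) * (\<Sum>m. ennreal (\<bar>v (Suc m)\<bar> powr r))"
    unfolding ennreal_suminf_cmult[symmetric] by (intro suminf_le summableI)
  then show ?thesis unfolding r_def by (rule lq_norm_le_if_power_sums_le[OF q False c])
qed

lemma powr_le_suminf_weighted_powr:
  fixes y r K :: real and f w :: "nat \<Rightarrow> real"
  assumes r: "1 \<le> r" and K: "0 < K" and w: "\<And>j. 0 \<le> w j" "\<And>j. w j \<le> 1"
    and le: "\<And>M. 0 \<le> M \<Longrightarrow> (\<And>j. w j * \<bar>f j\<bar> \<le> M) \<Longrightarrow> \<bar>y\<bar> \<le> K * M"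
  shows "ennreal (\<bar>y\<bar> powr r) \<le> ennreal (K powr r) * (\<Sum>j. ennreal (w j * \<bar>f j\<bar> powr r))"
proof (cases "(\<Sum>j. ennreal (w j * \<bar>f j\<bar> powr r)) = \<infinity>")
  case True
  then show ?thesis using K by (simp add: ennreal_mult_top)
next
  case False
  then obtain W where W: "(\<Sum>j. ennreal (w j * \<bar>f j\<bar> powr r)) = ennreal W" "0 \<le> W"
    by (cases "\<Sum>j. ennreal (w j * \<bar>f j\<bar> powr r)") auto
  have "w j * \<bar>f j\<bar> \<le> W powr (1 / r)" for j
  proof -
    have "ennreal (w j * \<bar>f j\<bar> powr r) \<le> ennreal W"
      using sum_le_suminf[of "\<lambda>j. ennreal (w j * \<bar>f j\<bar> powr r)" "{j}"] W by simp
    then have "w j * \<bar>f j\<bar> powr r \<le> W" using W by (simp add: ennreal_le_iff)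
    moreover have "w j powr r \<le> w j"
      using w[of j] r by (cases "w j = 0") (auto intro: powr_le_one_le)
    ultimately have "(w j * \<bar>f j\<bar>) powr r \<le> W"
      using w[of j] by (simp add: powr_mult) (meson mult_right_mono order_trans powr_ge_zero)
    then have "((w j * \<bar>f j\<bar>) powr r) powr (1 / r) \<le> W powr (1 / r)"
      using r by (intro powr_mono2) auto
    then show ?thesis using r w[of j] by (simp add: powr_powr)
  qed
  then have "\<bar>y\<bar> \<le> K * W powr (1 / r)" by (intro le) auto
  then have "\<bar>y\<bar> powr r \<le> (K * W powr (1 / r)) powr r" using r by (intro powr_mono2) auto
  also have "\<dots> = K powr r * W" using r K W by (simp add: powr_mult powr_powr)
  finally show ?thesis using W K by (simp add: ennreal_mult[symmetric] ennreal_leI)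
qed

lemma lq_norm_top_le_weighted_sup:
  fixes u v w :: "nat \<Rightarrow> real"
  assumes K: "0 < K" and w: "\<And>j. w j \<le> 1" and s: "1 \<le> s"
    and le: "\<And>m M. 1 \<le> m \<Longrightarrow> 0 \<le> M \<Longrightarrow> (\<And>j. w j * \<bar>v (m + j)\<bar> \<le> M) \<Longrightarrow> \<bar>u m\<bar> \<le> K * M"
  shows "lq_norm \<infinity> u \<le> ennreal (K * s) * lq_norm \<infinity> v"
proof -
  define V where "V = (SUP m\<in>{1..}. ennreal \<bar>v m\<bar>)"
  have "ennreal \<bar>u m\<bar> \<le> ennreal (K * s) * V" if m: "1 \<le> m" for m
  proof (cases "V = \<infinity>")
    case True
    then show ?thesis using K s by (simp add: ennreal_mult_top)
  next
    case False
    then obtain M where M: "V = ennreal M" "0 \<le> M" by (cases V) auto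
    have "\<bar>v n\<bar> \<le> M" if "1 \<le> n" for n
    proof -
      have "ennreal \<bar>v n\<bar> \<le> V" unfolding V_def using that by (intro SUP_upper) auto
      then show ?thesis using M by simp
    qed
    then have "w j * \<bar>v (m + j)\<bar> \<le> M" for j
      using m mult_right_mono[OF w[of j] abs_ge_zero[of "v (m + j)"]]
      by (smt (verit) le_add1 order_trans)
    then have "\<bar>u m\<bar> \<le> K * M" using le m M by blast
    also have "\<dots> \<le> (K * s) * M"
      using K s M by (intro mult_right_mono) auto
    finally have "ennreal \<bar>u m\<bar> \<le> ennreal ((K * s) * M)" by (rule ennreal_leI)
    also have "\<dots> = ennreal (K * s) * V" using M K s by (simp add: ennreal_mult)
    finally show ?thesis .
  qed
  then have "(SUP m\<in>{1..}. ennreal \<bar>u m\<bar>) \<le> ennreal (K * s) * V"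
    by (intro SUP_least) auto
  then show ?thesis by (simp only: lq_norm_top V_def)
qed

lemma power_sums_le_weighted_sup:
  fixes u v w :: "nat \<Rightarrow> real"
  assumes r: "1 \<le> r" and K: "0 < K"
    and w: "\<And>j. 0 \<le> w j" "\<And>j. w j \<le> 1" and w_sums: "w sums s" and s: "1 \<le> s"
    and le: "\<And>m M. 1 \<le> m \<Longrightarrow> 0 \<le> M \<Longrightarrow> (\<And>j. w j * \<bar>v (m + j)\<bar> \<le> M) \<Longrightarrow> \<bar>u m\<bar> \<le> K * M"
  shows "(\<Sum>m. ennreal (\<bar>u (Suc m)\<bar> powr r)) \<le> ennreal ((K * s) powr r) * (\<Sum>m. ennreal (\<bar>v (Suc m)\<bar> powr r))"
proof -
  define Sv where "Sv = (\<Sum>m. ennreal (\<bar>v (Suc m)\<bar> powr r))"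
  have s_ennreal: "(\<Sum>j. ennreal (w j)) = ennreal s"
    unfolding sums_unique[OF w_sums] by (rule suminf_ennreal2[OF w(1) sums_summable[OF w_sums]])
  have "ennreal (\<bar>u (Suc m)\<bar> powr r)
      \<le> ennreal (K powr r) * (\<Sum>j. ennreal (w j * \<bar>v (Suc m + j)\<bar> powr r))" for m
    by (rule powr_le_suminf_weighted_powr[OF r K w]) (rule le; simp)
  then have "(\<Sum>m. ennreal (\<bar>u (Suc m)\<bar> powr r))
      \<le> (\<Sum>m. ennreal (K powr r) * (\<Sum>j. ennreal (w j * \<bar>v (Suc m + j)\<bar> powr r)))"
    by (intro suminf_le summableI)
  also have "\<dots> \<le> ennreal (K powr r) * (\<Sum>j. \<Sum>m. ennreal (w j * \<bar>v (Suc m + j)\<bar> powr r))"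
    unfolding ennreal_suminf_cmult by (intro mult_left_mono ennreal_suminf_swap_le) simp
  also have "\<dots> = ennreal (K powr r) * (\<Sum>j. ennreal (w j) * (\<Sum>m. ennreal (\<bar>v (Suc (m + j))\<bar> powr r)))"
    by (simp only: ennreal_mult[OF w(1) powr_ge_zero] ennreal_suminf_cmult add_Suc)
  also have "\<dots> \<le> ennreal (K powr r) * (\<Sum>j. ennreal (w j) * Sv)"
  proof -
    have "(\<Sum>m. ennreal (\<bar>v (Suc (m + j))\<bar> powr r)) \<le> Sv" for j
      unfolding Sv_def by (rule ennreal_suminf_shift_le[of "\<lambda>m. ennreal (\<bar>v (Suc m)\<bar> powr r)"])
    then show ?thesis by (intro mult_left_mono suminf_le summableI) simp_all
  qed
  also have "\<dots> = ennreal (K powr r * s) * Sv"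
    by (simp only: ennreal_suminf_multc s_ennreal) (simp add: ennreal_mult' mult.assoc)
  also have "\<dots> \<le> ennreal ((K * s) powr r) * Sv"
  proof -
    have "s \<le> s powr r" using s r using powr_mono[of 1 r s] by simp
    then have "K powr r * s \<le> (K * s) powr r" using K s by (simp add: powr_mult)
    then show ?thesis by (intro mult_right_mono ennreal_leI) auto
  qed
  finally show ?thesis by (simp only: Sv_def)
qed

lemma lq_norm_le_weighted_sup:
  fixes u v w :: "nat \<Rightarrow> real"
  assumes q: "1 \<le> q" and K: "0 < K"
    and w: "\<And>j. 0 \<le> w j" "\<And>j. w j \<le> 1" and w_sums: "w sums s" and s: "1 \<le> s"
    and le: "\<And>m M. 1 \<le> m \<Longrightarrow> 0 \<le> M \<Longrightarrow> (\<And>j. w j * \<bar>v (m + j)\<bar> \<le> M) \<Longrightarrow> \<bar>u m\<bar> \<le> K * M"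
  shows "lq_norm q u \<le> ennreal (K * s) * lq_norm q v"
proof (cases "q = \<infinity>")
  case True
  show ?thesis unfolding True by (rule lq_norm_top_le_weighted_sup[where u = u and v = v and w = w, OF K w(2) s le])
next
  case False
  have "0 \<le> K * s" using K s by simp
  then show ?thesis
    using power_sums_le_weighted_sup[where u = u and v = v and w = w, OF one_le_enn2real[OF q False] K w w_sums s le]
    by (rule lq_norm_le_if_power_sums_le[OF q False])
qed

definition period_prod :: "(int \<Rightarrow> real) \<Rightarrow> nat \<Rightarrow> real" where
  "period_prod a k = (\<Prod>i<k. a (int (Suc i)))"

definition period_sum :: "(int \<Rightarrow> real) \<Rightarrow> nat \<Rightarrow> real" where
  "period_sum b k = (\<Sum>i<k. b (int (Suc i)))"

lemma matrix_mult_2_entry: "((A :: real^2^2) ** B) $ i $ j = A $ i $ 1 * B $ 1 $ j + A $ i $ 2 * B $ 2 $ j"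
  by (simp add: matrix_matrix_mult_def sum_2)

lemma scaled_transfer_prod_Suc:
  fixes a b :: "int \<Rightarrow> real" and x :: real
  assumes "a (int (Suc k)) \<noteq> 0"
  defines "M \<equiv> \<lambda>i j. period_prod a k * transfer_prod a b k x $ i $ j"
  shows "period_prod a (Suc k) * transfer_prod a b (Suc k) x $ 1 $ 1 = (x - b (int (Suc k))) * M 1 1 - M 2 1"
    and "period_prod a (Suc k) * transfer_prod a b (Suc k) x $ 1 $ 2 = (x - b (int (Suc k))) * M 1 2 - M 2 2"
    and "period_prod a (Suc k) * transfer_prod a b (Suc k) x $ 2 $ 1 = a (int (Suc k)) ^ 2 * M 1 1"
    and "period_prod a (Suc k) * transfer_prod a b (Suc k) x $ 2 $ 2 = a (int (Suc k)) ^ 2 * M 1 2"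
  using assms by (simp_all add: matrix_mult_2_entry transfer_def period_prod_def field_simps power2_eq_square)

lemma scaled_transfer_prod_polys:
  fixes a b :: "int \<Rightarrow> real"
  assumes a: "\<And>n. a n \<noteq> 0" and k: "1 \<le> k"
  shows "\<exists>Q11 Q12 Q21 Q22.
    (\<forall>x. period_prod a k * transfer_prod a b k x $ 1 $ 1 = poly Q11 x) \<and>
    (\<forall>x. period_prod a k * transfer_prod a b k x $ 1 $ 2 = poly Q12 x) \<and>
    (\<forall>x. period_prod a k * transfer_prod a b k x $ 2 $ 1 = poly Q21 x) \<and>
    (\<forall>x. period_prod a k * transfer_prod a b k x $ 2 $ 2 = poly Q22 x) \<and>
    coeff Q11 k = 1 \<and> coeff Q11 (k - 1) = - period_sum b k \<and> (\<forall>i>k. coeff Q11 i = 0) \<and>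
    (\<forall>i\<ge>k. coeff Q12 i = 0) \<and> (\<forall>i\<ge>k. coeff Q21 i = 0) \<and> (\<forall>i. k \<le> i + 1 \<longrightarrow> coeff Q22 i = 0)"
  using k
proof (induction k rule: nat_induct_at_least)
  case base
  note entries = scaled_transfer_prod_Suc[of a 0 b, OF a]
  show ?case
  proof (intro exI conjI allI impI)
    show "period_prod a 1 * transfer_prod a b 1 x $ 1 $ 1 = poly [:- b 1, 1:] x"
      and "period_prod a 1 * transfer_prod a b 1 x $ 1 $ 2 = poly [:- 1:] x"
      and "period_prod a 1 * transfer_prod a b 1 x $ 2 $ 1 = poly [:a 1 ^ 2:] x"
      and "period_prod a 1 * transfer_prod a b 1 x $ 2 $ 2 = poly 0 x" for x
      using entries[of x] by (simp_all add: period_prod_def mat_def)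
  qed (auto simp: period_sum_def coeff_pCons split: nat.splits)
next
  case (Suc k)
  then obtain Q11 Q12 Q21 Q22 where
    Q: "\<forall>x. period_prod a k * transfer_prod a b k x $ 1 $ 1 = poly Q11 x"
       "\<forall>x. period_prod a k * transfer_prod a b k x $ 1 $ 2 = poly Q12 x"
       "\<forall>x. period_prod a k * transfer_prod a b k x $ 2 $ 1 = poly Q21 x"
       "\<forall>x. period_prod a k * transfer_prod a b k x $ 2 $ 2 = poly Q22 x"
    and c: "coeff Q11 k = 1" "coeff Q11 (k - 1) = - period_sum b k" "\<forall>i>k. coeff Q11 i = 0"
       "\<forall>i\<ge>k. coeff Q12 i = 0" "\<forall>i\<ge>k. coeff Q21 i = 0" "\<forall>i. k \<le> i + 1 \<longrightarrow> coeff Q22 i = 0"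
    by blast
  define \<alpha> \<beta> where "\<alpha> = a (int (Suc k))" and "\<beta> = b (int (Suc k))"
  note entries = scaled_transfer_prod_Suc[of a k b, OF a]
  show ?case
  proof (intro exI conjI allI impI)
    show "period_prod a (Suc k) * transfer_prod a b (Suc k) x $ 1 $ 1 = poly ([:- \<beta>, 1:] * Q11 - Q21) x"
      and "period_prod a (Suc k) * transfer_prod a b (Suc k) x $ 1 $ 2 = poly ([:- \<beta>, 1:] * Q12 - Q22) x"
      and "period_prod a (Suc k) * transfer_prod a b (Suc k) x $ 2 $ 1 = poly (smult (\<alpha>\<^sup>2) Q11) x"
      and "period_prod a (Suc k) * transfer_prod a b (Suc k) x $ 2 $ 2 = poly (smult (\<alpha>\<^sup>2) Q12) x" for x
      using entries[of x] Q by (simp_all add: \<alpha>_def \<beta>_def algebra_simps)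
    show "coeff ([:- \<beta>, 1:] * Q11 - Q21) (Suc k) = 1"
      using c by simp
    show "coeff ([:- \<beta>, 1:] * Q11 - Q21) (Suc k - 1) = - period_sum b (Suc k)"
      using c Suc.hyps by (cases k) (auto simp: \<beta>_def period_sum_def)
    show "coeff ([:- \<beta>, 1:] * Q11 - Q21) i = 0" if "Suc k < i" for i
      using that c by (cases i) auto
    show "coeff ([:- \<beta>, 1:] * Q12 - Q22) i = 0" if "Suc k \<le> i" for i
      using that c by (cases i) auto
    show "coeff (smult (\<alpha>\<^sup>2) Q11) i = 0" if "Suc k \<le> i" for i
      using that c by auto
    show "coeff (smult (\<alpha>\<^sup>2) Q12) i = 0" if "Suc k \<le> i + 1" for i
      using that c by auto
  qed
qed

lemma scaled_discriminant_poly: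
  fixes a b :: "int \<Rightarrow> real"
  assumes a: "\<And>n. a n \<noteq> 0" and p: "1 \<le> p"
  shows "\<exists>Q. (\<forall>x. period_prod a p * discriminant p a b x = poly Q x) \<and>
    coeff Q p = 1 \<and> coeff Q (p - 1) = - period_sum b p"
proof -
  obtain Q11 Q22 where
    Q: "\<forall>x. period_prod a p * transfer_prod a b p x $ 1 $ 1 = poly Q11 x"
       "\<forall>x. period_prod a p * transfer_prod a b p x $ 2 $ 2 = poly Q22 x"
    and c: "coeff Q11 p = 1" "coeff Q11 (p - 1) = - period_sum b p"
       "\<forall>i. p \<le> i + 1 \<longrightarrow> coeff Q22 i = 0"
    using scaled_transfer_prod_polys[of a p b, OF a p] by blast
  show ?thesis
  proof (intro exI conjI allI)
    show "period_prod a p * discriminant p a b x = poly (Q11 + Q22) x" for x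
      using Q by (simp add: discriminant_def trace2_def distrib_left)
  qed (use c p in simp_all)
qed

lemma discriminant_determines_period_prod_sum:
  fixes a b a' b' :: "int \<Rightarrow> real"
  assumes a: "\<And>n. 0 < a n" and a': "\<And>n. 0 < a' n" and p: "1 \<le> p"
    and disc: "discriminant p a b = discriminant p a' b'"
  shows "period_prod a p = period_prod a' p" "period_sum b p = period_sum b' p"
proof -
  have nonzero: "\<And>n. a n \<noteq> 0" "\<And>n. a' n \<noteq> 0"
    using a a' by (metis less_irrefl)+
  obtain Q where Q: "\<forall>x. period_prod a p * discriminant p a b x = poly Q x"
      "coeff Q p = 1" "coeff Q (p - 1) = - period_sum b p"
    using scaled_discriminant_poly[of a p b, OF nonzero(1) p] by blast
  obtain Q' where Q': "\<forall>x. period_prod a' p * discriminant p a' b' x = poly Q' x"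
      "coeff Q' p = 1" "coeff Q' (p - 1) = - period_sum b' p"
    using scaled_discriminant_poly[of a' p b', OF nonzero(2) p] by blast
  have pos: "0 < period_prod a p" "0 < period_prod a' p"
    using a a' by (auto simp: period_prod_def intro: prod_pos)
  have "poly (smult (1 / period_prod a p) Q) x = discriminant p a b x"
    and "poly (smult (1 / period_prod a' p) Q') x = discriminant p a' b' x" for x
    using Q(1) Q'(1) pos by (simp_all add: field_simps)
  then have "poly (smult (1 / period_prod a p) Q) = poly (smult (1 / period_prod a' p) Q')"
    using disc by auto
  then have eq: "smult (1 / period_prod a p) Q = smult (1 / period_prod a' p) Q'"
    by (simp add: poly_eq_poly_eq_iff)
  show prod_eq: "period_prod a p = period_prod a' p"
    using arg_cong[OF eq, of "\<lambda>R. coeff R p"] Q(2) Q'(2) by simp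
  show "period_sum b p = period_sum b' p"
    using arg_cong[OF eq, of "\<lambda>R. coeff R (p - 1)"] Q(3) Q'(3) prod_eq pos by (simp add: field_simps)
qed

lemma sum_window_Suc:
  fixes h :: "nat \<Rightarrow> real"
  shows "(\<Sum>i<p. h (Suc n + i)) = (\<Sum>i<p. h (n + i)) + h (n + p) - h n"
  using sum.lessThan_Suc_shift[of "\<lambda>i. h (n + i)" p] by simp

lemma periodic_window_sum:
  fixes f :: "int \<Rightarrow> real"
  assumes per: "\<And>n. f (n + int p) = f n"
  shows "(\<Sum>i<p. f (int (n + i))) = (\<Sum>i<p. f (int i))"
proof (induction n)
  case (Suc n)
  have "(\<Sum>i<p. f (int (Suc n + i))) = (\<Sum>i<p. f (int (n + i))) + f (int (n + p)) - f (int n)"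
    by (rule sum_window_Suc[of "\<lambda>j. f (int j)"])
  also have "f (int (n + p)) = f (int n)" using per[of "int n"] by simp
  finally show ?case using Suc.IH by simp
qed simp

lemma periodic_add_mult:
  fixes f :: "int \<Rightarrow> real"
  assumes per: "\<And>n. f (n + int p) = f n"
  shows "f (int (n + p * q)) = f (int n)"
proof (induction q)
  case (Suc q)
  have "f (int (n + p * Suc q)) = f (int (n + p * q) + int p)" by (simp add: algebra_simps)
  then show ?case using per Suc.IH by simp
qed simp

lemma periodic_abs_le_sum:
  fixes f :: "int \<Rightarrow> real"
  assumes per: "\<And>n. f (n + int p) = f n" and p: "1 \<le> p"
  shows "\<bar>f (int n)\<bar> \<le> (\<Sum>i<p. \<bar>f (int i)\<bar>)"
proof -
  have "f (int n) = f (int (n mod p))"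
    using periodic_add_mult[of f p "n mod p" "n div p", OF per] by simp
  also have "\<bar>\<dots>\<bar> \<le> (\<Sum>i<p. \<bar>f (int i)\<bar>)"
    using p by (intro member_le_sum) auto
  finally show ?thesis .
qed

lemma iso_torus_periodic:
  assumes "(a', b') \<in> iso_torus p a0 b0"
  shows "0 < a' n" "a' (n + int p) = a' n" "b' (n + int p) = b' n"
  using assms by (auto simp: iso_torus_def periodic_jacobi_def)

lemma iso_torus_window_sums:
  assumes per0: "periodic_jacobi p a0 b0" and t: "(a', b') \<in> iso_torus p a0 b0"
  shows "(\<Sum>i<p. b' (int (n + i))) = period_sum b0 p"
    and "(\<Sum>i<p. ln (a' (int (n + i)))) = ln (period_prod a0 p)"
proof -
  have per: "periodic_jacobi p a' b'" and disc: "discriminant p a' b' = discriminant p a0 b0"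
    using t by (auto simp: iso_torus_def)
  then have a': "\<And>n. 0 < a' n" "\<And>n. a' (n + int p) = a' n" and b': "\<And>n. b' (n + int p) = b' n"
    and p: "1 \<le> p" and a0: "\<And>n. 0 < a0 n"
    using per0 by (auto simp: periodic_jacobi_def)
  note invariants = discriminant_determines_period_prod_sum[OF a'(1) a0 p disc]
  have shift1: "(\<Sum>i<p. g (int i)) = (\<Sum>i<p. g (int (Suc i)))" if "\<And>n. g (n + int p) = g n" for g :: "int \<Rightarrow> real"
    using periodic_window_sum[of g p 1, OF that] by simp
  show "(\<Sum>i<p. b' (int (n + i))) = period_sum b0 p"
    using periodic_window_sum[of b', OF b'] shift1[of b', OF b'] invariants(2)
    by (simp add: period_sum_def)
  have "(\<Sum>i<p. ln (a' (int (n + i)))) = (\<Sum>i<p. ln (a' (int (Suc i))))"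
    using periodic_window_sum[of "\<lambda>n. ln (a' n)" p n] shift1[of "\<lambda>n. ln (a' n)"] a'(2) by simp
  also have "\<dots> = ln (period_prod a' p)"
    unfolding period_prod_def using a'(1) by (subst ln_prod) (auto simp: less_imp_neq[symmetric])
  finally show "(\<Sum>i<p. ln (a' (int (n + i)))) = ln (period_prod a0 p)"
    using invariants(1) by simp
qed

lemma abs_ln_diff_le:
  fixes u v c :: real
  assumes "0 < c" "c \<le> u" "c \<le> v"
  shows "\<bar>ln u - ln v\<bar> \<le> \<bar>u - v\<bar> / c"
proof -
  have "ln x - ln y \<le> \<bar>x - y\<bar> / c" if "c \<le> x" "c \<le> y" for x y
  proof -
    have "ln x - ln y \<le> (x - y) / y" using that assms by (intro ln_diff_le) auto
    also have "\<dots> \<le> \<bar>x - y\<bar> / c"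
    proof (cases "y \<le> x")
      case False
      then have "(x - y) / y \<le> 0" "0 \<le> \<bar>x - y\<bar> / c" using that assms by (simp_all add: divide_nonpos_pos)
      then show ?thesis by linarith
    qed (use that assms in \<open>auto intro: divide_left_mono\<close>)
    finally show ?thesis .
  qed
  from this[of u v] this[of v u] assms show ?thesis by (simp add: abs_minus_commute abs_le_iff)
qed

lemma abs_diff_le_max_mult_abs_ln_diff:
  fixes u v :: real
  assumes "0 < u" "0 < v"
  shows "\<bar>u - v\<bar> \<le> max u v * \<bar>ln u - ln v\<bar>"
proof -
  have "x - y \<le> x * (ln x - ln y)" if "0 < y" "y \<le> x" for x y :: real
    using ln_diff_le[of y x] that by (simp add: field_simps)
  from this[of v u] this[of u v] assms show ?thesis
    by (cases "v \<le> u") (auto simp: max_def)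
qed

lemma power_mult_partial_sum_le:
  fixes x :: "nat \<Rightarrow> real"
  assumes "0 \<le> \<theta>" "\<theta> \<le> 1" and x: "\<And>j. 0 \<le> x j" and M: "\<And>j. \<theta> ^ j * x j \<le> M"
  shows "\<theta> ^ k * (\<Sum>j\<le>k. x j) \<le> real (Suc k) * M"
proof -
  have "\<theta> ^ k * (\<Sum>j\<le>k. x j) = (\<Sum>j\<le>k. \<theta> ^ k * x j)" by (simp add: sum_distrib_left)
  also have "\<dots> \<le> (\<Sum>j\<le>k. M)"
  proof (intro sum_mono)
    fix j assume "j \<in> {..k}"
    then have "\<theta> ^ k \<le> \<theta> ^ j" using assms by (simp add: power_decreasing)
    from mult_right_mono[OF this x[of j]] M[of j] show "\<theta> ^ k * x j \<le> M" by linarith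
  qed
  finally show ?thesis by simp
qed

lemma abs_diff_le_of_abs_ln_diff_le:
  fixes x y l c :: real
  assumes x: "0 < x" "x < c" and y: "0 < y" and l: "\<bar>ln x - ln y\<bar> \<le> l" "l \<le> 1"
  shows "\<bar>x - y\<bar> \<le> 3 * c * l"
proof -
  have "ln y \<le> ln x + 1" using l by linarith
  then have "y \<le> exp (ln x + 1)" using y by (metis exp_le_cancel_iff exp_ln)
  also have "\<dots> = x * exp 1" using x by (simp add: exp_add)
  also have "\<dots> \<le> c * 3" using x exp_le by (intro mult_mono) auto
  finally have "max x y \<le> 3 * c" using x by simp
  then have "max x y * \<bar>ln x - ln y\<bar> \<le> 3 * c * l"
    using l x by (intro mult_mono) auto
  then show ?thesis using abs_diff_le_max_mult_abs_ln_diff[OF x(1) y] by linarith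
qed

lemma le_of_forall_pos_le_add_mult:
  fixes X Y C :: real
  assumes "0 \<le> C" "\<And>e. 0 < e \<Longrightarrow> X \<le> Y + C * e"
  shows "X \<le> Y"
proof (rule field_le_epsilon)
  fix e :: real assume "0 < e"
  then have "0 < e / (C + 1)" using assms(1) by simp
  then have "X \<le> Y + C * (e / (C + 1))" by (rule assms(2))
  also have "C * (e / (C + 1)) \<le> e" using assms \<open>0 < e\<close> by (simp add: field_simps)
  finally show "X \<le> Y + e" by simp
qed

lemma summable_exp_neg_mult_bounded:
  fixes x :: "nat \<Rightarrow> real"
  assumes "\<And>k. \<bar>x k\<bar> \<le> B"
  shows "summable (\<lambda>k. exp (- real k) * x k)"
proof (rule summable_comparison_test')
  show "summable (\<lambda>k. B * exp (- 1) ^ k)"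
    by (intro summable_mult summable_geometric) simp
  show "norm (exp (- real k) * x k) \<le> B * exp (- 1) ^ k" for k
    using assms[of k] by (simp add: abs_mult exp_of_nat_mult[symmetric] mult.commute mult_left_mono)
qed

text \<open>The summand d k on the left absorbs the term d (k - p) of the next step of the induction.\<close>

lemma error_propagation:
  fixes E d :: "nat \<Rightarrow> real"
  assumes p: "1 \<le> p" and d: "\<And>j. 0 \<le> d j"
    and base: "\<And>k. k \<le> N \<Longrightarrow> k < p \<Longrightarrow> E k \<le> c"
    and step: "\<And>k. k \<le> N \<Longrightarrow> p \<le> k \<Longrightarrow> E k \<le> E (k - p) + d (k - p) + d (k - p + 1)"
  shows "k \<le> N \<Longrightarrow> E k + d k \<le> c + 2 * (\<Sum>j\<le>k. d j)"
proof (induction k rule: less_induct)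
  case (less k)
  show ?case
  proof (cases "k < p")
    case True
    have "d k \<le> (\<Sum>j\<le>k. d j)" using d by (intro member_le_sum) auto
    moreover have "0 \<le> (\<Sum>j\<le>k. d j)" using d by (intro sum_nonneg) auto
    ultimately show ?thesis using base less.prems True by fastforce
  next
    case False
    have IH: "E (k - p) + d (k - p) \<le> c + 2 * (\<Sum>j\<le>k - p. d j)"
      using less p False by simp
    have split: "(\<Sum>j\<le>k. d j) = (\<Sum>j\<le>k - p. d j) + (\<Sum>j\<in>{k - p<..k}. d j)"
      using False by (subst sum.union_disjoint[symmetric]) (auto intro: sum.cong)
    have "d (k - p + 1) \<le> (\<Sum>j\<in>{k - p<..k}. d j)" "d k \<le> (\<Sum>j\<in>{k - p<..k}. d j)"
      using d p False by (auto intro: member_le_sum)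
    then show ?thesis using IH step[OF less.prems] False split by linarith
  qed
qed

lemma dist_tilde_nonneg: "0 \<le> dist_tilde p m a b a' b'"
  unfolding dist_tilde_def by (intro sum_nonneg) auto

lemma dist_tilde_term_le:
  assumes "k < p"
  shows "\<bar>a (m + k) - a' (int (m + k))\<bar> + \<bar>b (m + k) - b' (int (m + k))\<bar> \<le> dist_tilde p m a b a' b'"
  unfolding dist_tilde_def using assms
  by (intro member_le_sum[where f = "\<lambda>k. \<bar>a (m + k) - a' (int (m + k))\<bar> + \<bar>b (m + k) - b' (int (m + k))\<bar>"]) auto

locale jacobi_near_torus =
  fixes p :: nat and a0 b0 :: "int \<Rightarrow> real" and \<epsilon> :: real and a b :: "nat \<Rightarrow> real"
  assumes periodic0: "periodic_jacobi p a0 b0" and eps: "0 < \<epsilon>"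
    and a_bounds: "\<And>n. 1 \<le> n \<Longrightarrow> \<epsilon> < a n \<and> a n < 1 / \<epsilon>"
    and bounded_a: "bounded (range a)" and bounded_b: "bounded (range b)"
begin

definition \<delta> :: "nat \<Rightarrow> real" where
  "\<delta> m = dist_tilde_torus p a0 b0 m a b"

lemma period_pos: "1 \<le> p"
  using periodic0 by (simp add: periodic_jacobi_def)

lemma iso_torus_nonempty: "iso_torus p a0 b0 \<noteq> {}"
  using periodic0 by (auto simp: iso_torus_def)

lemma delta_le_dist_tilde: "(a', b') \<in> iso_torus p a0 b0 \<Longrightarrow> \<delta> m \<le> dist_tilde p m a b a' b'"
  unfolding \<delta>_def dist_tilde_torus_def
  by (rule cINF_lower2) (auto intro: bdd_belowI2[where m = 0] dist_tilde_nonneg)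

lemma delta_nonneg: "0 \<le> \<delta> m"
  unfolding \<delta>_def dist_tilde_torus_def using iso_torus_nonempty
  by (intro cINF_greatest dist_tilde_nonneg) auto

lemma exists_dist_tilde_less:
  assumes "0 < \<eta>"
  obtains a' b' where "(a', b') \<in> iso_torus p a0 b0" "dist_tilde p m a b a' b' < \<delta> m + \<eta>"
proof -
  have "(INF t\<in>iso_torus p a0 b0. dist_tilde p m a b (fst t) (snd t)) < \<delta> m + \<eta>"
    using assms by (simp add: \<delta>_def dist_tilde_torus_def)
  then show ?thesis using that iso_torus_nonempty
    by (subst (asm) cInf_less_iff) (auto intro: bdd_belowI2[where m = 0] dist_tilde_nonneg)
qed

lemma b_window_sum_close: "\<bar>(\<Sum>i<p. b (n + i)) - period_sum b0 p\<bar> \<le> \<delta> n"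
  unfolding \<delta>_def dist_tilde_torus_def
proof (rule cINF_greatest[OF iso_torus_nonempty], clarify)
  fix a' b' assume t: "(a', b') \<in> iso_torus p a0 b0"
  have "\<bar>(\<Sum>i<p. b (n + i)) - period_sum b0 p\<bar> = \<bar>\<Sum>i<p. b (n + i) - b' (int (n + i))\<bar>"
    using iso_torus_window_sums(1)[OF periodic0 t] by (simp add: sum_subtractf)
  also have "\<dots> \<le> (\<Sum>i<p. \<bar>b (n + i) - b' (int (n + i))\<bar>)" by (rule sum_abs)
  also have "\<dots> \<le> dist_tilde p n a b a' b'" unfolding dist_tilde_def by (intro sum_mono) auto
  finally show "\<bar>(\<Sum>i<p. b (n + i)) - period_sum b0 p\<bar> \<le> dist_tilde p n a b (fst (a', b')) (snd (a', b'))"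
    by simp
qed

lemma ln_a_window_sum_close:
  assumes n: "1 \<le> n" and small: "\<delta> n < \<epsilon> / 2"
  shows "\<bar>(\<Sum>i<p. ln (a (n + i))) - ln (period_prod a0 p)\<bar> \<le> 2 / \<epsilon> * \<delta> n"
proof (rule le_of_forall_pos_le_add_mult[where C = "2 / \<epsilon>"])
  fix e :: real assume e: "0 < e"
  obtain a' b' where t: "(a', b') \<in> iso_torus p a0 b0"
    and close: "dist_tilde p n a b a' b' < \<delta> n + min e (\<epsilon> / 2 - \<delta> n)"
    using exists_dist_tilde_less[of "min e (\<epsilon> / 2 - \<delta> n)"] e small by auto
  then have close': "dist_tilde p n a b a' b' < \<epsilon> / 2" "dist_tilde p n a b a' b' \<le> \<delta> n + e"
    by linarith+
  have each: "\<bar>ln (a (n + i)) - ln (a' (int (n + i)))\<bar> \<le> 2 / \<epsilon> * \<bar>a (n + i) - a' (int (n + i))\<bar>"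
    if "i < p" for i
  proof -
    have "\<bar>a (n + i) - a' (int (n + i))\<bar> < \<epsilon> / 2"
      using dist_tilde_term_le[OF that, of a n a' b b'] close'(1) by linarith
    moreover have "\<epsilon> < a (n + i)" using a_bounds n by simp
    ultimately have "\<epsilon> / 2 \<le> a (n + i)" "\<epsilon> / 2 \<le> a' (int (n + i))" by linarith+
    then have "\<bar>ln (a (n + i)) - ln (a' (int (n + i)))\<bar> \<le> \<bar>a (n + i) - a' (int (n + i))\<bar> / (\<epsilon> / 2)"
      using eps by (intro abs_ln_diff_le) auto
    then show ?thesis by (simp add: field_simps)
  qed
  have "\<bar>(\<Sum>i<p. ln (a (n + i))) - ln (period_prod a0 p)\<bar>
      = \<bar>\<Sum>i<p. ln (a (n + i)) - ln (a' (int (n + i)))\<bar>"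
    using iso_torus_window_sums(2)[OF periodic0 t] by (simp add: sum_subtractf)
  also have "\<dots> \<le> (\<Sum>i<p. 2 / \<epsilon> * \<bar>a (n + i) - a' (int (n + i))\<bar>)"
    using each by (intro order.trans[OF sum_abs] sum_mono) auto
  also have "\<dots> \<le> 2 / \<epsilon> * dist_tilde p n a b a' b'"
    unfolding dist_tilde_def sum_distrib_left[symmetric] using eps by (intro mult_left_mono sum_mono) auto
  also have "\<dots> \<le> 2 / \<epsilon> * \<delta> n + 2 / \<epsilon> * e"
    using mult_left_mono[OF close'(2), of "2 / \<epsilon>"] eps by (simp add: distrib_left)
  finally show "\<bar>(\<Sum>i<p. ln (a (n + i))) - ln (period_prod a0 p)\<bar> \<le> 2 / \<epsilon> * \<delta> n + 2 / \<epsilon> * e" .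
qed (use eps in simp)

lemma b_period_step: "\<bar>b (n + p) - b n\<bar> \<le> \<delta> n + \<delta> (Suc n)"
  using b_window_sum_close[of n] b_window_sum_close[of "Suc n"] sum_window_Suc[of b n p] by linarith

lemma ln_a_period_step:
  assumes "1 \<le> n" "\<delta> n < \<epsilon> / 2" "\<delta> (Suc n) < \<epsilon> / 2"
  shows "\<epsilon> / 2 * \<bar>ln (a (n + p)) - ln (a n)\<bar> \<le> \<delta> n + \<delta> (Suc n)"
proof -
  have "\<bar>ln (a (n + p)) - ln (a n)\<bar> \<le> 2 / \<epsilon> * \<delta> n + 2 / \<epsilon> * \<delta> (Suc n)"
    using ln_a_window_sum_close[of n] ln_a_window_sum_close[of "Suc n"] assms
      sum_window_Suc[of "\<lambda>i. ln (a i)" n p] by simp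
  then show ?thesis using eps by (simp add: field_simps)
qed

lemma delta_le_partial_sum: "j \<le> k \<Longrightarrow> \<delta> (m + j) \<le> (\<Sum>i\<le>k. \<delta> (m + i))"
  using delta_nonneg by (intro member_le_sum[where f = "\<lambda>i. \<delta> (m + i)"]) auto

context
  fixes m :: nat and sa sb :: "int \<Rightarrow> real" and \<rho> :: real
  assumes m: "1 \<le> m" and torus: "(sa, sb) \<in> iso_torus p a0 b0"
    and close: "dist_tilde p m a b sa sb \<le> \<rho>"
begin

lemma initial_window_close:
  assumes "k < p"
  shows "\<bar>a (m + k) - sa (int (m + k))\<bar> \<le> \<rho>" "\<bar>b (m + k) - sb (int (m + k))\<bar> \<le> \<rho>"
  using dist_tilde_term_le[OF assms, of a m sa b sb] close by linarith+

lemma rho_nonneg: "0 \<le> \<rho>"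
  using dist_tilde_nonneg close by (rule order_trans)

lemma b_error_propagation:
  "\<bar>b (m + k) - sb (int (m + k))\<bar> + \<delta> (m + k) \<le> \<rho> + 2 * (\<Sum>j\<le>k. \<delta> (m + j))"
proof (rule error_propagation[where E = "\<lambda>k. \<bar>b (m + k) - sb (int (m + k))\<bar>" and N = k,
      OF period_pos delta_nonneg])
  fix k' assume "p \<le> k'"
  define n where "n = m + (k' - p)"
  have n: "m + k' = n + p" "m + (k' - p) = n" "m + (k' - p + 1) = Suc n"
    using \<open>p \<le> k'\<close> by (simp_all add: n_def)
  have "\<bar>b (n + p) - sb (int (n + p))\<bar> \<le> \<bar>b n - sb (int n)\<bar> + \<bar>b (n + p) - b n\<bar>"
    using iso_torus_periodic(3)[OF torus, of "int n"] by simp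
  then show "\<bar>b (m + k') - sb (int (m + k'))\<bar>
      \<le> \<bar>b (m + (k' - p)) - sb (int (m + (k' - p)))\<bar> + \<delta> (m + (k' - p)) + \<delta> (m + (k' - p + 1))"
    unfolding n using b_period_step[of n] by linarith
qed (use initial_window_close in auto)

lemma ln_a_error_propagation:
  assumes small: "\<rho> + 2 * (\<Sum>j\<le>k. \<delta> (m + j)) < \<epsilon> / 2"
  shows "\<epsilon> / 2 * \<bar>ln (a (m + k)) - ln (sa (int (m + k)))\<bar> + \<delta> (m + k) \<le> \<rho> + 2 * (\<Sum>j\<le>k. \<delta> (m + j))"
proof (rule error_propagation[where E = "\<lambda>k. \<epsilon> / 2 * \<bar>ln (a (m + k)) - ln (sa (int (m + k)))\<bar>" and N = k,
      OF period_pos delta_nonneg])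
  have sum_nonneg: "0 \<le> (\<Sum>j\<le>k. \<delta> (m + j))" using delta_nonneg by (intro sum_nonneg) auto
  show "\<epsilon> / 2 * \<bar>ln (a (m + k')) - ln (sa (int (m + k')))\<bar> \<le> \<rho>" if "k' < p" for k'
  proof -
    have close': "\<bar>a (m + k') - sa (int (m + k'))\<bar> \<le> \<rho>" using that by (rule initial_window_close)
    moreover have "\<epsilon> < a (m + k')" using a_bounds m by simp
    ultimately have "\<epsilon> / 2 \<le> a (m + k')" "\<epsilon> / 2 \<le> sa (int (m + k'))"
      using small sum_nonneg by linarith+
    then have "\<bar>ln (a (m + k')) - ln (sa (int (m + k')))\<bar> \<le> \<bar>a (m + k') - sa (int (m + k'))\<bar> / (\<epsilon> / 2)"
      using eps by (intro abs_ln_diff_le) auto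
    then show ?thesis using close' eps by (simp add: field_simps)
  qed
  show "\<epsilon> / 2 * \<bar>ln (a (m + k')) - ln (sa (int (m + k')))\<bar>
      \<le> \<epsilon> / 2 * \<bar>ln (a (m + (k' - p))) - ln (sa (int (m + (k' - p))))\<bar> + \<delta> (m + (k' - p)) + \<delta> (m + (k' - p + 1))"
    if "k' \<le> k" "p \<le> k'" for k'
  proof -
    define n where "n = m + (k' - p)"
    have n: "m + k' = n + p" "m + (k' - p) = n" "m + (k' - p + 1) = Suc n"
      using \<open>p \<le> k'\<close> by (simp_all add: n_def)
    have "\<delta> n \<le> (\<Sum>j\<le>k. \<delta> (m + j))" "\<delta> (Suc n) \<le> (\<Sum>j\<le>k. \<delta> (m + j))"
      using delta_le_partial_sum[of "k' - p" k] delta_le_partial_sum[of "k' - p + 1" k] that period_pos n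
      by auto
    then have "\<epsilon> / 2 * \<bar>ln (a (n + p)) - ln (a n)\<bar> \<le> \<delta> n + \<delta> (Suc n)"
      using small rho_nonneg delta_nonneg[of n] m n by (intro ln_a_period_step) auto
    moreover have "\<bar>ln (a (n + p)) - ln (sa (int (n + p)))\<bar> \<le> \<bar>ln (a n) - ln (sa (int n))\<bar> + \<bar>ln (a (n + p)) - ln (a n)\<bar>"
      using iso_torus_periodic(2)[OF torus, of "int n"] by simp
    then have "\<epsilon> / 2 * \<bar>ln (a (n + p)) - ln (sa (int (n + p)))\<bar>
        \<le> \<epsilon> / 2 * \<bar>ln (a n) - ln (sa (int n))\<bar> + \<epsilon> / 2 * \<bar>ln (a (n + p)) - ln (a n)\<bar>"
      using eps by (simp add: distrib_left[symmetric])
    ultimately show ?thesis unfolding n by linarith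
  qed
qed simp

lemma a_error_bound:
  "\<bar>a (m + k) - sa (int (m + k))\<bar> \<le> (6 / \<epsilon>\<^sup>2 + 1) * (\<rho> + 2 * (\<Sum>j\<le>k. \<delta> (m + j)))"
proof -
  define R where "R = \<rho> + 2 * (\<Sum>j\<le>k. \<delta> (m + j))"
  have "0 \<le> (\<Sum>j\<le>k. \<delta> (m + j))" by (intro sum_nonneg) (simp add: delta_nonneg)
  then have R: "\<rho> \<le> R" "0 \<le> R" using rho_nonneg by (simp_all add: R_def)
  have a: "\<epsilon> < a (m + k)" "a (m + k) < 1 / \<epsilon>" using a_bounds m by auto
  have sa: "0 < sa (int (m + k))" by (rule iso_torus_periodic(1)[OF torus])
  \<comment> \<open>Small errors are compared through logarithms; otherwise R dominates 1 / \<epsilon>.\<close>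
  show ?thesis
  proof (cases "R < \<epsilon> / 2")
    case True
    define l where "l = \<bar>ln (a (m + k)) - ln (sa (int (m + k)))\<bar>"
    have "\<epsilon> / 2 * l \<le> R"
      using ln_a_error_propagation[OF True[unfolded R_def]] delta_nonneg[of "m + k"] by (simp add: l_def R_def)
    then have l: "l \<le> 2 / \<epsilon> * R" using eps by (simp add: field_simps)
    moreover have "2 / \<epsilon> * R < 1" using True eps by (simp add: field_simps)
    ultimately have "\<bar>a (m + k) - sa (int (m + k))\<bar> \<le> 3 * (1 / \<epsilon>) * (2 / \<epsilon> * R)"
      using a eps sa unfolding l_def by (intro abs_diff_le_of_abs_ln_diff_le) auto
    also have "\<dots> \<le> (6 / \<epsilon>\<^sup>2 + 1) * R" using R eps by (simp add: power2_eq_square algebra_simps)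
    finally show ?thesis by (simp add: R_def)
  next
    case False
    have "sa (int (m + k)) = sa (int (m + k mod p))"
      using periodic_add_mult[of sa p "m + k mod p" "k div p", OF iso_torus_periodic(2)[OF torus]]
      by (simp add: add.commute)
    also have "\<dots> \<le> a (m + k mod p) + R"
      using initial_window_close(1)[of "k mod p"] period_pos R by simp
    also have "\<dots> \<le> 1 / \<epsilon> + R" using a_bounds[of "m + k mod p"] m by simp
    finally have "\<bar>a (m + k) - sa (int (m + k))\<bar> \<le> 2 / \<epsilon> + R" using a sa eps by simp
    also have "2 / \<epsilon> \<le> 4 / \<epsilon>\<^sup>2 * R" using False eps by (simp add: power2_eq_square field_simps)
    also have "4 / \<epsilon>\<^sup>2 * R + R \<le> (6 / \<epsilon>\<^sup>2 + 1) * R"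
      using R by (simp add: distrib_right mult_right_mono divide_right_mono)
    finally show ?thesis by (simp add: R_def)
  qed
qed

lemma torus_error_bound:
  "\<bar>a (m + k) - sa (int (m + k))\<bar> + \<bar>b (m + k) - sb (int (m + k))\<bar>
    \<le> (6 / \<epsilon>\<^sup>2 + 2) * (\<rho> + 2 * (\<Sum>j\<le>k. \<delta> (m + j)))"
  using a_error_bound[of k] b_error_propagation[of k] delta_nonneg[of "m + k"]
  by (simp add: distrib_right)

lemma exp_neg_mult_torus_error_le:
  assumes M: "\<And>j. exp (- 1 / 2) ^ j * \<delta> (m + j) \<le> M"
  shows "exp (- real k) * (\<bar>a (m + k) - sa (int (m + k))\<bar> + \<bar>b (m + k) - sb (int (m + k))\<bar>)
    \<le> (6 / \<epsilon>\<^sup>2 + 2) * (\<rho> - \<delta> m) * exp (- 1) ^ k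
      + 3 * (6 / \<epsilon>\<^sup>2 + 2) * M * (real (Suc k) * exp (- 1 / 2) ^ k)"
proof -
  define \<theta> K S where "\<theta> = exp (- 1 / 2 :: real)" and "K = 6 / \<epsilon>\<^sup>2 + 2"
    and "S = (\<Sum>j\<le>k. \<delta> (m + j))"
  have K: "0 < K" using eps by (simp add: K_def add_pos_nonneg)
  have S_le: "\<theta> ^ k * S \<le> real (Suc k) * M"
    unfolding \<theta>_def S_def using M delta_nonneg by (intro power_mult_partial_sum_le) auto
  have "\<delta> m \<le> S" using delta_le_partial_sum[of 0 k m] by (simp add: S_def)
  have "\<bar>a (m + k) - sa (int (m + k))\<bar> + \<bar>b (m + k) - sb (int (m + k))\<bar> \<le> K * (\<rho> + 2 * S)"
    using torus_error_bound[of k] by (simp add: K_def S_def)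
  also have "\<dots> \<le> K * ((\<rho> - \<delta> m) + 3 * S)"
    using \<open>\<delta> m \<le> S\<close> K by (intro mult_left_mono) auto
  finally have "exp (- real k) * (\<bar>a (m + k) - sa (int (m + k))\<bar> + \<bar>b (m + k) - sb (int (m + k))\<bar>)
      \<le> exp (- real k) * (K * ((\<rho> - \<delta> m) + 3 * S))" by (simp add: mult_left_mono)
  also have "exp (- real k) = exp (- 1) ^ k" "exp (- real k) = \<theta> ^ k * \<theta> ^ k"
    by (simp_all add: \<theta>_def flip: exp_of_nat_mult exp_add)
  then have "exp (- real k) * (K * ((\<rho> - \<delta> m) + 3 * S))
      = K * (\<rho> - \<delta> m) * exp (- 1) ^ k + 3 * K * \<theta> ^ k * (\<theta> ^ k * S)"
    by (simp add: algebra_simps)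
  also have "\<dots> \<le> K * (\<rho> - \<delta> m) * exp (- 1) ^ k + 3 * K * M * (real (Suc k) * \<theta> ^ k)"
    using S_le K by (simp add: \<theta>_def mult_left_mono mult.assoc mult.commute[of M])
  finally show ?thesis by (simp add: K_def \<theta>_def)
qed

end

lemma dist_exp_summable:
  assumes "(a', b') \<in> iso_torus p a0 b0"
  shows "summable (\<lambda>k. exp (- real k) * (\<bar>a (m + k) - a' (int (m + k))\<bar> + \<bar>b (m + k) - b' (int (m + k))\<bar>))"
proof -
  obtain A B where A: "\<And>n. \<bar>a n\<bar> \<le> A" and B: "\<And>n. \<bar>b n\<bar> \<le> B"
    using bounded_a bounded_b by (auto simp: bounded_iff)
  note a' = iso_torus_periodic(2)[OF assms] and b' = iso_torus_periodic(3)[OF assms]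
  show ?thesis
  proof (rule summable_exp_neg_mult_bounded)
    fix k
    show "\<bar>\<bar>a (m + k) - a' (int (m + k))\<bar> + \<bar>b (m + k) - b' (int (m + k))\<bar>\<bar>
      \<le> A + (\<Sum>i<p. \<bar>a' (int i)\<bar>) + B + (\<Sum>i<p. \<bar>b' (int i)\<bar>)"
      using A[of "m + k"] B[of "m + k"] periodic_abs_le_sum[of a' p "m + k", OF a' period_pos]
        periodic_abs_le_sum[of b' p "m + k", OF b' period_pos] by linarith
  qed
qed

lemma dist_exp_nonneg: "(a', b') \<in> iso_torus p a0 b0 \<Longrightarrow> 0 \<le> dist_exp m a b a' b'"
  unfolding dist_exp_def by (intro suminf_nonneg dist_exp_summable) auto

lemma dist_exp_torus_le_dist_exp:
  assumes "(a', b') \<in> iso_torus p a0 b0"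
  shows "dist_exp_torus p a0 b0 m a b \<le> dist_exp m a b a' b'"
  unfolding dist_exp_torus_def using assms
  by (intro cINF_lower2[where x = "(a', b')"] bdd_belowI2[where m = 0]) (auto simp: dist_exp_nonneg)

lemma dist_exp_torus_nonneg: "0 \<le> dist_exp_torus p a0 b0 m a b"
  unfolding dist_exp_torus_def
  by (rule cINF_greatest[OF iso_torus_nonempty], clarify) (simp add: dist_exp_nonneg)

lemma delta_le_exp_mult_dist_exp_torus: "\<delta> m \<le> exp (real p - 1) * dist_exp_torus p a0 b0 m a b"
proof -
  have "\<delta> m / exp (real p - 1) \<le> dist_exp_torus p a0 b0 m a b"
    unfolding dist_exp_torus_def
  proof (rule cINF_greatest[OF iso_torus_nonempty], clarify)
    fix a' b' assume t: "(a', b') \<in> iso_torus p a0 b0"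
    define D where "D k = \<bar>a (m + k) - a' (int (m + k))\<bar> + \<bar>b (m + k) - b' (int (m + k))\<bar>" for k
    have "\<delta> m \<le> (\<Sum>k<p. D k)"
      using delta_le_dist_tilde[OF t] by (simp add: dist_tilde_def D_def)
    also have "\<dots> \<le> (\<Sum>k<p. exp (real p - 1) * (exp (- real k) * D k))"
    proof (intro sum_mono)
      fix k assume "k \<in> {..<p}"
      then have "1 \<le> exp (real p - 1) * exp (- real k)" by (simp flip: exp_add)
      from mult_right_mono[OF this, of "D k"] show "D k \<le> exp (real p - 1) * (exp (- real k) * D k)"
        by (simp add: D_def mult.assoc)
    qed
    also have "\<dots> \<le> exp (real p - 1) * (\<Sum>k. exp (- real k) * D k)"
      unfolding sum_distrib_left[symmetric] using dist_exp_summable[OF t, of m]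
      by (intro mult_left_mono sum_le_suminf) (auto simp: D_def)
    finally show "\<delta> m / exp (real p - 1) \<le> dist_exp m a b (fst (a', b')) (snd (a', b'))"
      by (simp add: dist_exp_def D_def field_simps)
  qed
  then show ?thesis by (simp add: field_simps)
qed

lemma dist_exp_torus_le_weighted_sup:
  assumes m: "1 \<le> m" and M: "\<And>j. exp (- 1 / 2) ^ j * \<delta> (m + j) \<le> M"
  shows "dist_exp_torus p a0 b0 m a b \<le> 3 * (6 / \<epsilon>\<^sup>2 + 2) / (1 - exp (- 1 / 2))\<^sup>2 * M"
proof (rule le_of_forall_pos_le_add_mult[where C = "(6 / \<epsilon>\<^sup>2 + 2) / (1 - exp (- 1))"])
  define \<theta> K where "\<theta> = exp (- 1 / 2 :: real)" and "K = 6 / \<epsilon>\<^sup>2 + 2"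
  have \<theta>: "0 < \<theta>" "\<theta> < 1" by (simp_all add: \<theta>_def)
  fix \<eta> :: real assume \<eta>: "0 < \<eta>"
  obtain sa sb where torus: "(sa, sb) \<in> iso_torus p a0 b0" and close: "dist_tilde p m a b sa sb < \<delta> m + \<eta>"
    using exists_dist_tilde_less[OF \<eta>] by blast
  define g where "g k = K * \<eta> * exp (- 1) ^ k + 3 * K * M * (real (Suc k) * \<theta> ^ k)" for k
  have g_sums: "g sums (K * \<eta> * (1 / (1 - exp (- 1))) + 3 * K * M * (1 / (1 - \<theta>)\<^sup>2))"
    unfolding g_def using \<theta> by (intro sums_add sums_mult geometric_sums geometric_deriv_sums) auto
  have "dist_exp m a b sa sb \<le> suminf g"
    unfolding dist_exp_def using dist_exp_summable[OF torus, of m] sums_summable[OF g_sums]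
  proof (rule suminf_le[rotated])
    show "exp (- real k) * (\<bar>a (m + k) - sa (int (m + k))\<bar> + \<bar>b (m + k) - sb (int (m + k))\<bar>) \<le> g k" for k
      using exp_neg_mult_torus_error_le[OF m torus less_imp_le[OF close] M, of k]
      by (simp add: g_def K_def \<theta>_def)
  qed
  then have "dist_exp_torus p a0 b0 m a b \<le> K * \<eta> / (1 - exp (- 1)) + 3 * K * M / (1 - \<theta>)\<^sup>2"
    using dist_exp_torus_le_dist_exp[OF torus, of m] g_sums by (simp add: sums_iff)
  then show "dist_exp_torus p a0 b0 m a b
      \<le> 3 * (6 / \<epsilon>\<^sup>2 + 2) / (1 - exp (- 1 / 2))\<^sup>2 * M + (6 / \<epsilon>\<^sup>2 + 2) / (1 - exp (- 1)) * \<eta>"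
    by (simp add: K_def \<theta>_def)
qed (use eps in simp)

end

theorem proposition3p5:
  fixes p :: nat and a0 b0 :: "int \<Rightarrow> real" and q :: ennreal and \<epsilon> :: real
  assumes "periodic_jacobi p a0 b0"
    and "1 \<le> q"
    and "\<epsilon> > 0"
  shows "\<exists>C::real. \<forall>a b :: nat \<Rightarrow> real.
     (bounded (range b) \<and> (\<forall>n\<ge>1. \<epsilon> < a n \<and> a n < 1 / \<epsilon>) \<and> bounded (range a)) \<longrightarrow>
       ennreal (exp (1 - real p)) * lq_norm q (\<lambda>m. dist_tilde_torus p a0 b0 m a b)
         \<le> lq_norm q (\<lambda>m. dist_exp_torus p a0 b0 m a b)
     \<and> lq_norm q (\<lambda>m. dist_exp_torus p a0 b0 m a b)
         \<le> ennreal C * lq_norm q (\<lambda>m. dist_tilde_torus p a0 b0 m a b)"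
proof -
  define \<theta> K where "\<theta> = exp (- 1 / 2 :: real)" and "K = 3 * (6 / \<epsilon>\<^sup>2 + 2) / (1 - \<theta>)\<^sup>2"
  have \<theta>: "0 < \<theta>" "\<theta> < 1" by (simp_all add: \<theta>_def)
  have K: "0 < K" using assms(3) \<theta> by (simp add: K_def add_pos_nonneg)
  show ?thesis
  proof (intro exI[of _ "K * (1 / (1 - \<theta>))"] allI impI conjI)
    fix a b :: "nat \<Rightarrow> real"
    assume "bounded (range b) \<and> (\<forall>n\<ge>1. \<epsilon> < a n \<and> a n < 1 / \<epsilon>) \<and> bounded (range a)"
    then interpret jacobi_near_torus p a0 b0 \<epsilon> a b
      using assms by unfold_locales auto
    have "lq_norm q \<delta> \<le> ennreal (exp (real p - 1)) * lq_norm q (\<lambda>m. dist_exp_torus p a0 b0 m a b)"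
      using delta_le_exp_mult_dist_exp_torus delta_nonneg dist_exp_torus_nonneg
      by (intro lq_norm_le_scaled[OF assms(2)]) auto
    from ennreal_inverse_mult_le[OF exp_gt_zero this]
    show "ennreal (exp (1 - real p)) * lq_norm q (\<lambda>m. dist_tilde_torus p a0 b0 m a b)
        \<le> lq_norm q (\<lambda>m. dist_exp_torus p a0 b0 m a b)"
      by (simp add: \<delta>_def[abs_def] exp_diff)
    have "lq_norm q (\<lambda>m. dist_exp_torus p a0 b0 m a b) \<le> ennreal (K * (1 / (1 - \<theta>))) * lq_norm q \<delta>"
    proof (rule lq_norm_le_weighted_sup[OF assms(2) K])
      show "(\<lambda>j. \<theta> ^ j) sums (1 / (1 - \<theta>))" using \<theta> by (simp add: geometric_sums)
      show "\<bar>dist_exp_torus p a0 b0 m a b\<bar> \<le> K * M"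
        if "1 \<le> m" "0 \<le> M" "\<And>j. \<theta> ^ j * \<bar>\<delta> (m + j)\<bar> \<le> M" for m M
        using dist_exp_torus_le_weighted_sup[OF that(1)] that(3) delta_nonneg dist_exp_torus_nonneg
        by (simp add: K_def \<theta>_def)
    qed (use \<theta> in \<open>auto intro: power_le_one\<close>)
    then show "lq_norm q (\<lambda>m. dist_exp_torus p a0 b0 m a b)
        \<le> ennreal (K * (1 / (1 - \<theta>))) * lq_norm q (\<lambda>m. dist_tilde_torus p a0 b0 m a b)"
      by (simp add: \<delta>_def[abs_def])
  qed
qed

end
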